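(* Let $p\in\mathbb{R}$ and $\gamma>0$. Let $z=(v,m,\sigma,e)\in Z$ satisfy $m\ne(e+p)v$, $2e-|v|^2>0$, $M(z)=0$, $e<\gamma$ and \[\left|\frac{(m-(e+p)v)(2\gamma-|v|^2)}{(\gamma-e)(2e-|v|^2)}-v\right|\le\sqrt{2\gamma}.\] Then $z\in K_\gamma^{\Lambda,1}$.
   Context: $\mathcal S_0^{2\times2}$ is the space of traceless symmetric $2\times2$ matrices, $Z:=\mathbb{R}^2\times\mathbb{R}^2\times\mathcal S_0^{2\times2}\times\mathbb{R}$, $K_\gamma:=\{z\in Z: v\otimes v-\sigma=e\,\mathrm{Id},\ m=(e+p)v,\ e\le\gamma\}$. The wave cone is $\Lambda=\{\bar z=(\bar v,\bar m,\bar\sigma,\bar e)\in Z:\ (\bar v,\bar e)\neq0\text{ and there is }0\ne(\xi,c)\in\mathbb{R}^2\times\mathbb{R}\text{ with }(\bar\sigma+\bar e\,\mathrm{Id})\xi+c\bar v=0,\ \bar v\cdot\xi=0,\ \bar m\cdot\xi+c\bar e=0\}$. $K_\gamma^{\Lambda,1}:=K_\gamma\cup\{sz_1+(1-s)z_2: z_1,z_2\in K_\gamma,\ s\in[0,1],\ z_1-z_2\in\Lambda\}$. For $z$ with $m\ne(e+p)v$, $\eta(z):=\frac{m-(e+p)v}{|m-(e+p)v|}$ and $M(z):=v\otimes v-\sigma-e\,\mathrm{Id}+(2e-|v|^2)\eta(z)\otimes\eta(z)$. *)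

theory Defs
  imports "HOL-Analysis.Analysis"
begin

text \<open>A point z = (v, m, sigma, e) of Z = R^2 x R^2 x S_0^{2x2} x R.
  The ambient type is real^2 x real^2 x real^2^2 x real; membership in Z
  additionally requires sigma to be symmetric and traceless.\<close>

type_synonym zpt = "(real^2) \<times> (real^2) \<times> ((real^2)^2) \<times> real"

definition outer :: "real^2 \<Rightarrow> real^2 \<Rightarrow> real^2^2" where
  "outer a b = (\<chi> i j. a $ i * b $ j)"

definition Zset :: "zpt set" where
  "Zset = {(v, m, \<sigma>, e). transpose \<sigma> = \<sigma> \<and> trace \<sigma> = 0}"

definition Kgam :: "real \<Rightarrow> real \<Rightarrow> zpt set" where
  "Kgam p \<gamma> = {(v, m, \<sigma>, e) \<in> Zset.
      outer v v - \<sigma> = e *\<^sub>R mat 1 \<and> m = (e + p) *\<^sub>R v \<and> e \<le> \<gamma>}"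

definition wave_cone :: "zpt set" where
  "wave_cone = {(v, m, \<sigma>, e) \<in> Zset. (v, e) \<noteq> 0 \<and>
      (\<exists>\<xi>::real^2. \<exists>c::real. (\<xi>, c) \<noteq> 0 \<and>
         (\<sigma> + e *\<^sub>R mat 1) *v \<xi> + c *\<^sub>R v = 0 \<and>
         v \<bullet> \<xi> = 0 \<and> m \<bullet> \<xi> + c * e = 0)}"

definition KLam1 :: "real \<Rightarrow> real \<Rightarrow> zpt set" where
  "KLam1 p \<gamma> = Kgam p \<gamma> \<union>
     {s *\<^sub>R z1 + (1 - s) *\<^sub>R z2 | s z1 z2.
        z1 \<in> Kgam p \<gamma> \<and> z2 \<in> Kgam p \<gamma> \<and> s \<in> {0..1} \<and> z1 - z2 \<in> wave_cone}"

definition eta :: "real \<Rightarrow> zpt \<Rightarrow> real^2" where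
  "eta p z = (case z of (v, m, \<sigma>, e) \<Rightarrow>
      (1 / norm (m - (e + p) *\<^sub>R v)) *\<^sub>R (m - (e + p) *\<^sub>R v))"

definition Mmat :: "real \<Rightarrow> zpt \<Rightarrow> real^2^2" where
  "Mmat p z = (case z of (v, m, \<sigma>, e) \<Rightarrow>
      outer v v - \<sigma> - e *\<^sub>R mat 1 + (2 * e - (norm v)^2) *\<^sub>R outer (eta p z) (eta p z))"

end

(* M(z) = 0 means sigma = v (x) v - e Id + D eta (x) eta with D = 2e - |v|^2, and
   m = (e + p) v + W eta with W = |m - (e + p) v|.  A point of K_gamma is determined by its
   velocity u (its energy is |u|^2/2), and z is the barycentre of the K-points with velocities
   v + b eta and v - a eta, where a, b > 0 solve ab = D, b - a = 2W/D - 2 eta.v; two K-points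
   always differ by a wave-cone vector.  The energy of v - a eta is below e, and that of
   v + b eta is at most gamma iff b <= B = (gamma - e) D / W.  On the line v + t eta, the
   substitution t -> -(2 gamma - |v|^2)/t turns the hypothesis into |v + B eta|^2 >= 2 gamma,
   which forces b <= B. *)

theory Submission
  imports Defs
begin

lemma inner_vec2: "(x::real^2) \<bullet> y = x$1 * y$1 + x$2 * y$2"
  by (simp add: inner_vec_def sum_2)

lemma outer_add_left: "outer (x + y) z = outer x z + outer y z"
  and outer_add_right: "outer z (x + y) = outer z x + outer z y"
  and outer_diff_left: "outer (x - y) z = outer x z - outer y z"
  and outer_diff_right: "outer z (x - y) = outer z x - outer z y"
  and outer_scaleR_left: "outer (c *\<^sub>R x) z = c *\<^sub>R outer x z"
  and outer_scaleR_right: "outer z (c *\<^sub>R x) = c *\<^sub>R outer z x"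
  by (simp_all add: outer_def vec_eq_iff algebra_simps)

lemmas outer_bilinear = outer_add_left outer_add_right outer_diff_left outer_diff_right
  outer_scaleR_left outer_scaleR_right

lemma outer_mult_vec: "outer a b *v x = (b \<bullet> x) *\<^sub>R a"
  by (simp add: outer_def matrix_vector_mult_def vec_eq_iff inner_vec2 sum_2 algebra_simps)

lemma norm_add_scaleR_unit_sq:
  fixes v \<eta> :: "'a::real_inner"
  assumes "\<eta> \<bullet> \<eta> = 1"
  shows "(norm (v + t *\<^sub>R \<eta>))\<^sup>2 = (norm v)\<^sup>2 + 2 * t * (\<eta> \<bullet> v) + t\<^sup>2"
  unfolding power2_norm_eq_inner using assms
  by (simp add: inner_add_left inner_add_right inner_commute power2_eq_square algebra_simps)

lemma norm_add_scaleR_ge_if_reciprocal_le: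
  fixes v \<eta> :: "'a::real_inner" and B c :: real
  assumes "\<eta> \<bullet> \<eta> = 1" "B > 0" "(norm v)\<^sup>2 < c"
    and "norm (v - ((c - (norm v)\<^sup>2) / B) *\<^sub>R \<eta>) \<le> sqrt c"
  shows "(norm (v + B *\<^sub>R \<eta>))\<^sup>2 \<ge> c"
proof -
  define P where "P = c - (norm v)\<^sup>2"
  have "P > 0" using assms(3) by (simp add: P_def)
  have "c > 0" using assms(3) zero_le_power2[of "norm v"] by linarith
  have minus: "(norm (v - (P / B) *\<^sub>R \<eta>))\<^sup>2 = (norm v)\<^sup>2 - 2 * (P / B) * (\<eta> \<bullet> v) + (P / B)\<^sup>2"
    using norm_add_scaleR_unit_sq[OF assms(1), of v "- (P / B)"] by simp
  have plus: "(norm (v + B *\<^sub>R \<eta>))\<^sup>2 = (norm v)\<^sup>2 + 2 * B * (\<eta> \<bullet> v) + B\<^sup>2"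
    using norm_add_scaleR_unit_sq[OF assms(1)] .
  \<comment> \<open>\<open>t \<mapsto> -P/t\<close> swaps the roots of \<open>|v + t\<eta>|\<^sup>2 - c\<close>, whose constant term is \<open>-P\<close>\<close>
  have reciprocal: "(norm (v - (P / B) *\<^sub>R \<eta>))\<^sup>2 - c = - (P / B\<^sup>2) * ((norm (v + B *\<^sub>R \<eta>))\<^sup>2 - c)"
    unfolding minus plus using assms(2) by (simp add: P_def power2_eq_square field_simps)
  have "(norm (v - (P / B) *\<^sub>R \<eta>))\<^sup>2 \<le> (sqrt c)\<^sup>2"
    using assms(4) by (intro power_mono) (auto simp: P_def)
  then have "(norm (v - (P / B) *\<^sub>R \<eta>))\<^sup>2 - c \<le> 0"
    using \<open>c > 0\<close> by simp
  then have "- (P / B\<^sup>2) * ((norm (v + B *\<^sub>R \<eta>))\<^sup>2 - c) \<le> 0"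
    unfolding reciprocal .
  then show ?thesis
    using \<open>P > 0\<close> assms(2) by (simp add: zero_le_divide_iff zero_le_mult_iff)
qed

text \<open>The points of \<open>K\<^sub>\<gamma>\<close> are parametrised by their velocity \<open>u\<close>: the trace of
  \<open>u \<otimes> u - \<sigma> = e Id\<close> forces \<open>e = |u|\<^sup>2/2\<close>.\<close>

definition Kpoint :: "real \<Rightarrow> real^2 \<Rightarrow> zpt" where
  "Kpoint p u = (u, ((norm u)\<^sup>2 / 2 + p) *\<^sub>R u, outer u u - ((norm u)\<^sup>2 / 2) *\<^sub>R mat 1, (norm u)\<^sup>2 / 2)"

lemma Kpoint_in_Kgam:
  assumes "(norm u)\<^sup>2 \<le> 2 * \<gamma>"
  shows "Kpoint p u \<in> Kgam p \<gamma>"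
  using assms unfolding Kpoint_def Kgam_def Zset_def power2_norm_eq_inner
  by (auto simp: vec_eq_iff transpose_def outer_def mat_def trace_def sum_2 inner_vec2 forall_2)

lemma Kpoint_in_Zset: "Kpoint p u \<in> Zset"
  unfolding Kpoint_def Zset_def power2_norm_eq_inner
  by (auto simp: vec_eq_iff transpose_def outer_def mat_def trace_def sum_2 inner_vec2 forall_2)

lemma Zset_diff: "z\<^sub>1 \<in> Zset \<Longrightarrow> z\<^sub>2 \<in> Zset \<Longrightarrow> z\<^sub>1 - z\<^sub>2 \<in> Zset"
  by (cases z\<^sub>1; cases z\<^sub>2) (auto simp: Zset_def trace_sub transpose_def vec_eq_iff)

text \<open>The wave-cone direction is \<open>\<xi> = (u\<^sub>1 - u\<^sub>2)\<^sup>\<perp>\<close> with \<open>c = - u\<^sub>1 \<bullet> \<xi>\<close>;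
  everything rests on \<open>u\<^sub>1 \<bullet> \<xi> = u\<^sub>2 \<bullet> \<xi>\<close>.\<close>

lemma Kpoint_diff_in_wave_cone:
  assumes "u\<^sub>1 \<noteq> u\<^sub>2"
  shows "Kpoint p u\<^sub>1 - Kpoint p u\<^sub>2 \<in> wave_cone"
proof -
  define E :: "real^2 \<Rightarrow> real" where "E u = (norm u)\<^sup>2 / 2" for u
  define d where "d = u\<^sub>1 - u\<^sub>2"
  define \<xi> :: "real^2" where "\<xi> = vector [- d$2, d$1]"
  define c where "c = - (u\<^sub>1 \<bullet> \<xi>)"
  have "d \<noteq> 0" using assms by (simp add: d_def)
  then have "\<xi> \<noteq> 0" by (auto simp: \<xi>_def vec_eq_iff forall_2)
  have "d \<bullet> \<xi> = 0" by (simp add: \<xi>_def inner_vec2)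
  then have same: "u\<^sub>2 \<bullet> \<xi> = u\<^sub>1 \<bullet> \<xi>" by (simp add: d_def inner_diff_left)
  have diff: "Kpoint p u\<^sub>1 - Kpoint p u\<^sub>2 = (d, (E u\<^sub>1 + p) *\<^sub>R u\<^sub>1 - (E u\<^sub>2 + p) *\<^sub>R u\<^sub>2,
      outer u\<^sub>1 u\<^sub>1 - E u\<^sub>1 *\<^sub>R mat 1 - (outer u\<^sub>2 u\<^sub>2 - E u\<^sub>2 *\<^sub>R mat 1), E u\<^sub>1 - E u\<^sub>2)"
    by (simp add: Kpoint_def E_def d_def)
  have "(outer u\<^sub>1 u\<^sub>1 - E u\<^sub>1 *\<^sub>R mat 1 - (outer u\<^sub>2 u\<^sub>2 - E u\<^sub>2 *\<^sub>R mat 1) + (E u\<^sub>1 - E u\<^sub>2) *\<^sub>R mat 1) *v \<xi>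
      + c *\<^sub>R d = 0"
    by (simp add: outer_mult_vec same c_def d_def algebra_simps)
  moreover have "((E u\<^sub>1 + p) *\<^sub>R u\<^sub>1 - (E u\<^sub>2 + p) *\<^sub>R u\<^sub>2) \<bullet> \<xi> + c * (E u\<^sub>1 - E u\<^sub>2) = 0"
    by (simp add: same c_def inner_diff_left algebra_simps)
  moreover have "Kpoint p u\<^sub>1 - Kpoint p u\<^sub>2 \<in> Zset"
    by (intro Zset_diff Kpoint_in_Zset)
  ultimately show ?thesis
    using \<open>d \<noteq> 0\<close> \<open>\<xi> \<noteq> 0\<close> \<open>d \<bullet> \<xi> = 0\<close> unfolding wave_cone_def diff
    by (auto simp: zero_prod_def)
qed

lemma Kpoint_convex_combination_in_KLam1:
  assumes "(norm u\<^sub>1)\<^sup>2 \<le> 2 * \<gamma>" "(norm u\<^sub>2)\<^sup>2 \<le> 2 * \<gamma>" "u\<^sub>1 \<noteq> u\<^sub>2" "s \<in> {0..1}"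
  shows "s *\<^sub>R Kpoint p u\<^sub>1 + (1 - s) *\<^sub>R Kpoint p u\<^sub>2 \<in> KLam1 p \<gamma>"
  using assms Kpoint_in_Kgam Kpoint_diff_in_wave_cone unfolding KLam1_def by blast

lemma barycentric_split_moments:
  fixes s a b E\<^sub>1 E\<^sub>2 N \<beta> p :: real
  assumes sa: "s * (a + b) = a" and E\<^sub>1: "E\<^sub>1 = (N + 2 * b * \<beta> + b\<^sup>2) / 2" and E\<^sub>2: "E\<^sub>2 = (N - 2 * a * \<beta> + a\<^sup>2) / 2"
  shows "s * b - (1 - s) * a = 0" and "s * b\<^sup>2 + (1 - s) * a\<^sup>2 = a * b"
    and "s * E\<^sub>1 + (1 - s) * E\<^sub>2 = (N + a * b) / 2"
    and "s * b * (E\<^sub>1 + p) - (1 - s) * a * (E\<^sub>2 + p) = a * b * (2 * \<beta> + b - a) / 2"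
proof -
  show balance: "s * b - (1 - s) * a = 0"
    using sa by (simp add: algebra_simps)
  have "s * b\<^sup>2 + (1 - s) * a\<^sup>2 - a * b = (b - a) * (s * (a + b) - a)"
    by (simp add: power2_eq_square algebra_simps)
  then show second: "s * b\<^sup>2 + (1 - s) * a\<^sup>2 = a * b"
    using sa by simp
  have "s * E\<^sub>1 + (1 - s) * E\<^sub>2 = N / 2 + \<beta> * (s * b - (1 - s) * a) + (s * b\<^sup>2 + (1 - s) * a\<^sup>2) / 2"
    by (simp add: E\<^sub>1 E\<^sub>2 field_simps)
  then show "s * E\<^sub>1 + (1 - s) * E\<^sub>2 = (N + a * b) / 2"
    by (simp add: balance second)
  have "s * b * (E\<^sub>1 + p) - (1 - s) * a * (E\<^sub>2 + p) = s * b * (E\<^sub>1 - E\<^sub>2) + (s * b - (1 - s) * a) * (E\<^sub>2 + p)"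
    by (simp add: algebra_simps)
  also have "\<dots> = s * b * (E\<^sub>1 - E\<^sub>2)"
    by (simp add: balance)
  also have "E\<^sub>1 - E\<^sub>2 = (a + b) * (2 * \<beta> + b - a) / 2"
    by (simp add: E\<^sub>1 E\<^sub>2 power2_eq_square field_simps)
  also have "s * b * ((a + b) * (2 * \<beta> + b - a) / 2) = (s * (a + b)) * b * (2 * \<beta> + b - a) / 2"
    by simp
  finally show "s * b * (E\<^sub>1 + p) - (1 - s) * a * (E\<^sub>2 + p) = a * b * (2 * \<beta> + b - a) / 2"
    by (simp add: sa)
qed

lemma Kpoint_split_combination:
  fixes v \<eta> :: "real^2" and a b :: real
  assumes "\<eta> \<bullet> \<eta> = 1" "a > 0" "b > 0"
  defines "s \<equiv> a / (a + b)" and "e \<equiv> ((norm v)\<^sup>2 + a * b) / 2"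
  shows "s *\<^sub>R Kpoint p (v + b *\<^sub>R \<eta>) + (1 - s) *\<^sub>R Kpoint p (v - a *\<^sub>R \<eta>) =
    (v, (e + p) *\<^sub>R v + (a * b * (2 * (\<eta> \<bullet> v) + b - a) / 2) *\<^sub>R \<eta>,
     outer v v - e *\<^sub>R mat 1 + (a * b) *\<^sub>R outer \<eta> \<eta>, e)"
proof -
  define \<beta> where "\<beta> = \<eta> \<bullet> v"
  define E\<^sub>1 where "E\<^sub>1 = (norm (v + b *\<^sub>R \<eta>))\<^sup>2 / 2"
  define E\<^sub>2 where "E\<^sub>2 = (norm (v - a *\<^sub>R \<eta>))\<^sup>2 / 2"
  have E\<^sub>1: "E\<^sub>1 = ((norm v)\<^sup>2 + 2 * b * \<beta> + b\<^sup>2) / 2"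
    using norm_add_scaleR_unit_sq[OF assms(1)] by (simp add: E\<^sub>1_def \<beta>_def)
  have E\<^sub>2: "E\<^sub>2 = ((norm v)\<^sup>2 - 2 * a * \<beta> + a\<^sup>2) / 2"
    using norm_add_scaleR_unit_sq[OF assms(1), of v "- a"] by (simp add: E\<^sub>2_def \<beta>_def)
  have "s * (a + b) = a" using assms(2,3) by (simp add: s_def)
  note moments = barycentric_split_moments[OF this E\<^sub>1 E\<^sub>2]
  have "s *\<^sub>R (v + b *\<^sub>R \<eta>) + (1 - s) *\<^sub>R (v - a *\<^sub>R \<eta>) = v + (s * b - (1 - s) * a) *\<^sub>R \<eta>"
    by (simp add: algebra_simps)
  moreover have "s *\<^sub>R ((E\<^sub>1 + p) *\<^sub>R (v + b *\<^sub>R \<eta>)) + (1 - s) *\<^sub>R ((E\<^sub>2 + p) *\<^sub>R (v - a *\<^sub>R \<eta>)) =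
      (s * E\<^sub>1 + (1 - s) * E\<^sub>2 + p) *\<^sub>R v + (s * b * (E\<^sub>1 + p) - (1 - s) * a * (E\<^sub>2 + p)) *\<^sub>R \<eta>"
    by (simp add: algebra_simps)
  moreover have "s *\<^sub>R (outer (v + b *\<^sub>R \<eta>) (v + b *\<^sub>R \<eta>) - E\<^sub>1 *\<^sub>R mat 1)
      + (1 - s) *\<^sub>R (outer (v - a *\<^sub>R \<eta>) (v - a *\<^sub>R \<eta>) - E\<^sub>2 *\<^sub>R mat 1) =
      outer v v + (s * b - (1 - s) * a) *\<^sub>R (outer v \<eta> + outer \<eta> v)
      + (s * b\<^sup>2 + (1 - s) * a\<^sup>2) *\<^sub>R outer \<eta> \<eta> - (s * E\<^sub>1 + (1 - s) * E\<^sub>2) *\<^sub>R mat 1"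
    by (simp add: outer_bilinear power2_eq_square algebra_simps)
  ultimately show ?thesis
    unfolding Kpoint_def E\<^sub>1_def[symmetric] E\<^sub>2_def[symmetric]
    by (simp add: moments e_def \<beta>_def)
qed

lemma exists_pos_factors_with_difference:
  fixes D \<delta> :: real
  assumes "D > 0"
  obtains a b where "a > 0" "b > 0" "a * b = D" "b - a = \<delta>"
proof -
  define r where "r = sqrt (\<delta>\<^sup>2 + 4 * D)"
  have r2: "r * r = \<delta> * \<delta> + 4 * D"
    using assms by (simp add: r_def flip: power2_eq_square)
  have "sqrt (\<delta>\<^sup>2) < r" unfolding r_def using assms by (intro real_sqrt_less_mono) simp
  then have "\<bar>\<delta>\<bar> < r" by simp
  then show ?thesis
    by (intro that[of "(r - \<delta>) / 2" "(r + \<delta>) / 2"])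
      (auto simp: r2 field_simps)
qed

lemma norm_sq_on_split_line:
  fixes v \<eta> :: "real^2"
  assumes "\<eta> \<bullet> \<eta> = 1" "D \<noteq> 0" "a * b = D" "b - a = 2 * W / D - 2 * (\<eta> \<bullet> v)"
    and "2 * e = (norm v)\<^sup>2 + D"
  shows "(norm (v + t *\<^sub>R \<eta>))\<^sup>2 = 2 * e + 2 * t * W / D + (t - b) * (t + a)"
proof -
  have "2 * t * (\<eta> \<bullet> v) = 2 * t * W / D - t * (b - a)"
    using assms(2) by (simp add: assms(4) field_simps)
  then show ?thesis
    unfolding norm_add_scaleR_unit_sq[OF assms(1)]
    using assms(3,5) by (simp add: power2_eq_square algebra_simps)
qed

lemma rank_one_point_in_KLam1:
  fixes v \<eta> :: "real^2" and W D e \<gamma> p :: real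
  assumes unit: "\<eta> \<bullet> \<eta> = 1" and "W > 0" "D > 0" and e: "2 * e = (norm v)\<^sup>2 + D" and "e < \<gamma>"
    and hyp: "norm (v - ((2 * \<gamma> - (norm v)\<^sup>2) / ((\<gamma> - e) * D / W)) *\<^sub>R \<eta>) \<le> sqrt (2 * \<gamma>)"
  shows "(v, (e + p) *\<^sub>R v + W *\<^sub>R \<eta>, outer v v - e *\<^sub>R mat 1 + D *\<^sub>R outer \<eta> \<eta>, e) \<in> KLam1 p \<gamma>"
proof -
  define B where "B = (\<gamma> - e) * D / W"
  have "B > 0" using assms by (simp add: B_def)
  have B_level: "2 * e + 2 * B * W / D = 2 * \<gamma>"
    using assms by (simp add: B_def)
  obtain a b where "a > 0" "b > 0" and ab: "a * b = D" and diff: "b - a = 2 * W / D - 2 * (\<eta> \<bullet> v)"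
    using exists_pos_factors_with_difference[OF \<open>D > 0\<close>] by blast
  have "D \<noteq> 0" using \<open>D > 0\<close> by simp
  note line = norm_sq_on_split_line[OF unit this ab diff e]
  have "(norm (v + B *\<^sub>R \<eta>))\<^sup>2 \<ge> 2 * \<gamma>"
    using hyp assms \<open>B > 0\<close> unfolding B_def by (intro norm_add_scaleR_ge_if_reciprocal_le) auto
  then have "(B - b) * (B + a) \<ge> 0"
    using line[of B] B_level \<open>D > 0\<close> by simp
  then have "b \<le> B" using \<open>B > 0\<close> \<open>a > 0\<close> by (simp add: zero_le_mult_iff)
  then have "2 * b * W / D \<le> 2 * B * W / D"
    using assms by (simp add: divide_right_mono)
  then have far: "(norm (v + b *\<^sub>R \<eta>))\<^sup>2 \<le> 2 * \<gamma>"
    using line[of b] B_level \<open>D > 0\<close> by simp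
  have "2 * a * W / D \<ge> 0" using \<open>a > 0\<close> \<open>W > 0\<close> \<open>D > 0\<close> by simp
  then have near: "(norm (v - a *\<^sub>R \<eta>))\<^sup>2 \<le> 2 * \<gamma>"
    using line[of "- a"] e \<open>e < \<gamma>\<close> by simp
  have "v + b *\<^sub>R \<eta> \<noteq> v - a *\<^sub>R \<eta>"
    using unit \<open>a > 0\<close> \<open>b > 0\<close> by (auto simp: algebra_simps simp flip: scaleR_add_left)
  moreover have "a / (a + b) \<in> {0..1}" using \<open>a > 0\<close> \<open>b > 0\<close> by simp
  moreover have "2 * (\<eta> \<bullet> v) + b - a = 2 * W / D" using diff by simp
  then have "(v, (e + p) *\<^sub>R v + W *\<^sub>R \<eta>, outer v v - e *\<^sub>R mat 1 + D *\<^sub>R outer \<eta> \<eta>, e) =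
      (a / (a + b)) *\<^sub>R Kpoint p (v + b *\<^sub>R \<eta>) + (1 - a / (a + b)) *\<^sub>R Kpoint p (v - a *\<^sub>R \<eta>)"
    using Kpoint_split_combination[OF unit \<open>a > 0\<close> \<open>b > 0\<close>, of p v] ab e \<open>D > 0\<close> by simp
  ultimately show ?thesis
    using Kpoint_convex_combination_in_KLam1[OF far near] by simp
qed

theorem lemma2p9:
  fixes p \<gamma> e :: real and v m :: "real^2" and \<sigma> :: "real^2^2"
  assumes "\<gamma> > 0"
    and "(v, m, \<sigma>, e) \<in> Zset"
    and "m \<noteq> (e + p) *\<^sub>R v"
    and "2 * e - (norm v)^2 > 0"
    and "Mmat p (v, m, \<sigma>, e) = 0"
    and "e < \<gamma>"
    and "norm ((((2 * \<gamma> - (norm v)^2) / ((\<gamma> - e) * (2 * e - (norm v)^2))) *\<^sub>R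
                (m - (e + p) *\<^sub>R v)) - v) \<le> sqrt (2 * \<gamma>)"
  shows "(v, m, \<sigma>, e) \<in> KLam1 p \<gamma>"
proof -
  define W where "W = norm (m - (e + p) *\<^sub>R v)"
  define \<eta> where "\<eta> = eta p (v, m, \<sigma>, e)"
  define D where "D = 2 * e - (norm v)\<^sup>2"
  have "W > 0" using assms(3) by (simp add: W_def)
  have m: "m = (e + p) *\<^sub>R v + W *\<^sub>R \<eta>"
    using \<open>W > 0\<close> by (simp add: \<eta>_def eta_def W_def)
  have "\<eta> \<bullet> \<eta> = 1"
    using \<open>W > 0\<close> by (simp add: \<eta>_def eta_def W_def flip: power2_norm_eq_inner)
  have \<sigma>: "\<sigma> = outer v v - e *\<^sub>R mat 1 + D *\<^sub>R outer \<eta> \<eta>"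
    using assms(5) by (simp add: Mmat_def \<eta>_def D_def algebra_simps)
  have "((2 * \<gamma> - (norm v)\<^sup>2) / ((\<gamma> - e) * D)) *\<^sub>R (m - (e + p) *\<^sub>R v) =
      ((2 * \<gamma> - (norm v)\<^sup>2) / ((\<gamma> - e) * D / W)) *\<^sub>R \<eta>"
    using \<open>W > 0\<close> by (simp add: m)
  then have "norm (v - ((2 * \<gamma> - (norm v)\<^sup>2) / ((\<gamma> - e) * D / W)) *\<^sub>R \<eta>) \<le> sqrt (2 * \<gamma>)"
    using assms(7) by (simp add: D_def norm_minus_commute)
  moreover have "D > 0" "2 * e = (norm v)\<^sup>2 + D" using assms(4) by (simp_all add: D_def)
  ultimately have "(v, (e + p) *\<^sub>R v + W *\<^sub>R \<eta>, outer v v - e *\<^sub>R mat 1 + D *\<^sub>R outer \<eta> \<eta>, e) \<in> KLam1 p \<gamma>"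
    using \<open>\<eta> \<bullet> \<eta> = 1\<close> \<open>W > 0\<close> \<open>e < \<gamma>\<close> by (intro rank_one_point_in_KLam1)
  then show ?thesis
    unfolding m \<sigma> .
qed

end
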